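(* Let $(G,R,x_I,x_G)$ be any instance of the multi-robot path planning problem on graphs. Algorithm TOMPP is complete: if the instance has a solution, TOMPP terminates and returns a solution, and otherwise it reports that no solution exists. Moreover, whenever a solution exists, the solution returned by TOMPP has minimum makespan among all solutions of the instance.
   Context: Multi-robot path planning on graphs: $G=(V,E)$ is a connected, undirected, simple graph; $R=\{r_1,\dots,r_n\}$ is a set of robots; $x_I,x_G:R\to V$ are injective maps (initial and goal locations). Let $\mathbb Z^+=\mathbb N\cup\{0\}$. A path is a map $p_i:\mathbb Z^+\to V$. It is feasible for robot $r_i$ if (1) $p_i(0)=x_I(r_i)$; (2) there is a smallest $k_i^{\min}\in\mathbb Z^+$ with $p_i(k)=x_G(r_i)$ for all $k\ge k_i^{\min}$; (3) for all $0\le k<k_i^{\min}$, either $(p_i(k),p_i(k+1))\in E$ or $p_i(k)=p_i(k+1)$. Two paths $p_i,p_j$ ($i\neq j$) collide if there is $k$ with $p_i(k)=p_j(k)$ or $(p_i(k),p_i(k+1))=(p_j(k+1),p_j(k))$. A solution is a set $P=\{p_1,\dots,p_n\}$ with each $p_i$ feasible for $r_i$ and no two paths colliding. Its makespan is $T_P=\max_i k_i^{\min}$. Time-expanded network for a natural number $T$: a directed graph $G'$ whose vertices are, for each $v\in V$, copies $v(0)=v(0)'$, $v(1),v(1)',v(2),v(2)',\dots,v(T),v(T)'$, together with gadget vertices described next. Edges (all of unit capacity): $(v(t),v(t)')$ for $1\le t\le T$ and $(v(t)',v(t+1))$ for $0\le t<T$, for each $v\in V$; for each edge $\{u,v\}\in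 E$ and each $0\le t<T$, two new vertices $a,b$ and edges $u(t)'\to a$, $v(t)'\to a$, $a\to b$, $b\to u(t+1)$, $b\to v(t+1)$; and $n$ loopback edges $e_1,\dots,e_n$, where $e_i$ goes from $x_G(r_i)(T)'$ to $x_I(r_i)(0)$. Index all edges of $G'$ as $e_1,e_2,\dots$ with the loopback edges first. The ILP for $T$ has binary variables $x_{i,j}$ ($1\le i\le n$, $e_j\in G'$), constraints $\sum_{i=1}^n x_{i,j}\le 1$ for every edge $e_j$, $x_{i,j}=0$ for $1\le i,j\le n$, $i\ne j$, and for every vertex $v$ of $G'$ and every $i$, $\sum_{e_j\text{ entering } v}x_{i,j}=\sum_{e_j\text{ leaving }v}x_{i,j}$; objective: maximize $\sum_{i=1}^n x_{i,i}$. Algorithm TOMPP: start with $T=\max_i d_G(x_I(r_i),x_G(r_i))$ (graph distance); build and solve the ILP for $T$; if the optimum equals $n$, output the paths obtained by letting robot $r_i$ be at vertex $v$ at time $t$ when the unit flow of commodity $i$ passes through $v(t)$ (and staying at its goal afterwards); otherwise increase $T$ by one and repeat, reporting that no solution exists once $T$ exceeds a bound (e.g., the number of joint configurations) beyond which no new solutions can appear. *)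

theory Defs
  imports Main
begin

definition simple_connected_graph :: "'v set \<Rightarrow> ('v \<times> 'v) set \<Rightarrow> bool" where
  "simple_connected_graph V E \<longleftrightarrow>
     finite V \<and> E \<subseteq> V \<times> V \<and> sym E \<and> irrefl E \<and> (\<forall>u\<in>V. \<forall>v\<in>V. (u, v) \<in> E\<^sup>*)"

definition mpp_instance ::
  "'v set \<Rightarrow> ('v \<times> 'v) set \<Rightarrow> nat \<Rightarrow> (nat \<Rightarrow> 'v) \<Rightarrow> (nat \<Rightarrow> 'v) \<Rightarrow> bool" where
  "mpp_instance V E n xI xG \<longleftrightarrow>
     simple_connected_graph V E \<and> (\<forall>i<n. xI i \<in> V \<and> xG i \<in> V) \<and>
     inj_on xI {..<n} \<and> inj_on xG {..<n}"

definition kmin :: "(nat \<Rightarrow> 'v) \<Rightarrow> 'v \<Rightarrow> nat" where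
  "kmin p g = (LEAST k. \<forall>k'\<ge>k. p k' = g)"

definition feasible_path :: "('v \<times> 'v) set \<Rightarrow> 'v \<Rightarrow> 'v \<Rightarrow> (nat \<Rightarrow> 'v) \<Rightarrow> bool" where
  "feasible_path E s g p \<longleftrightarrow>
     p 0 = s \<and> (\<exists>k. \<forall>k'\<ge>k. p k' = g) \<and>
     (\<forall>k < kmin p g. (p k, p (Suc k)) \<in> E \<or> p k = p (Suc k))"

definition collide :: "(nat \<Rightarrow> 'v) \<Rightarrow> (nat \<Rightarrow> 'v) \<Rightarrow> bool" where
  "collide p q \<longleftrightarrow> (\<exists>k. p k = q k \<or> (p k, p (Suc k)) = (q (Suc k), q k))"

definition is_solution ::
  "('v \<times> 'v) set \<Rightarrow> nat \<Rightarrow> (nat \<Rightarrow> 'v) \<Rightarrow> (nat \<Rightarrow> 'v) \<Rightarrow> (nat \<Rightarrow> nat \<Rightarrow> 'v) \<Rightarrow> bool" where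
  "is_solution E n xI xG P \<longleftrightarrow>
     (\<forall>i<n. feasible_path E (xI i) (xG i) (P i)) \<and>
     (\<forall>i<n. \<forall>j<n. i \<noteq> j \<longrightarrow> \<not> collide (P i) (P j))"

text \<open>Makespan: maximum of the k_i^min (the maximum of the empty family is taken to be 0).\<close>
definition makespan :: "nat \<Rightarrow> (nat \<Rightarrow> 'v) \<Rightarrow> (nat \<Rightarrow> nat \<Rightarrow> 'v) \<Rightarrow> nat" where
  "makespan n xG P = Max (insert 0 {kmin (P i) (xG i) | i. i < n})"

definition gdist :: "('v \<times> 'v) set \<Rightarrow> 'v \<Rightarrow> 'v \<Rightarrow> nat" where
  "gdist E u v = (LEAST k. (u, v) \<in> E ^^ k)"

text \<open>Nodes: TIn v t = v(t) (t \<ge> 1), TOut v t = v(t)' (with TOut v 0 = v(0) = v(0)'),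
  GadA e t / GadB e t = gadget vertices a, b for the undirected edge e = {u,v} at time t.\<close>
datatype 'v tnode = TIn 'v nat | TOut 'v nat | GadA "'v set" nat | GadB "'v set" nat

text \<open>Edge labels (used instead of the integer indexing e_1, e_2, ...; LoopE i is the
  loopback edge of robot i).\<close>
datatype 'v tedge = LoopE nat | HoldE 'v nat | MoveE 'v nat
  | GInE 'v "'v set" nat | GMidE "'v set" nat | GOutE "'v set" 'v nat

definition uedges :: "('v \<times> 'v) set \<Rightarrow> 'v set set" where
  "uedges E = {{u, v} | u v. (u, v) \<in> E}"

definition tx_edges :: "'v set \<Rightarrow> ('v \<times> 'v) set \<Rightarrow> nat \<Rightarrow> nat \<Rightarrow> 'v tedge set" where
  "tx_edges V E n T =
     LoopE ` {..<n}
     \<union> {HoldE v t | v t. v \<in> V \<and> 1 \<le> t \<and> t \<le> T}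
     \<union> {MoveE v t | v t. v \<in> V \<and> t < T}
     \<union> {GInE w e t | w e t. e \<in> uedges E \<and> w \<in> e \<and> t < T}
     \<union> {GMidE e t | e t. e \<in> uedges E \<and> t < T}
     \<union> {GOutE e w t | e w t. e \<in> uedges E \<and> w \<in> e \<and> t < T}"

fun tx_src :: "(nat \<Rightarrow> 'v) \<Rightarrow> nat \<Rightarrow> 'v tedge \<Rightarrow> 'v tnode" where
  "tx_src xG T (LoopE i) = TOut (xG i) T"
| "tx_src xG T (HoldE v t) = TIn v t"
| "tx_src xG T (MoveE v t) = TOut v t"
| "tx_src xG T (GInE w e t) = TOut w t"
| "tx_src xG T (GMidE e t) = GadA e t"
| "tx_src xG T (GOutE e w t) = GadB e t"

fun tx_tgt :: "(nat \<Rightarrow> 'v) \<Rightarrow> 'v tedge \<Rightarrow> 'v tnode" where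
  "tx_tgt xI (LoopE i) = TOut (xI i) 0"
| "tx_tgt xI (HoldE v t) = TOut v t"
| "tx_tgt xI (MoveE v t) = TIn v (Suc t)"
| "tx_tgt xI (GInE w e t) = GadA e t"
| "tx_tgt xI (GMidE e t) = GadB e t"
| "tx_tgt xI (GOutE e w t) = TIn w (Suc t)"

text \<open>x i e is the binary variable of commodity i (robot r_i) on edge e; variables outside
  the index range are normalised to 0.\<close>
definition ilp_feasible ::
  "'v set \<Rightarrow> ('v \<times> 'v) set \<Rightarrow> nat \<Rightarrow> (nat \<Rightarrow> 'v) \<Rightarrow> (nat \<Rightarrow> 'v) \<Rightarrow> nat
     \<Rightarrow> (nat \<Rightarrow> 'v tedge \<Rightarrow> nat) \<Rightarrow> bool" where
  "ilp_feasible V E n xI xG T x \<longleftrightarrow>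
     (\<forall>i e. (n \<le> i \<or> e \<notin> tx_edges V E n T) \<longrightarrow> x i e = 0) \<and>
     (\<forall>i<n. \<forall>e\<in>tx_edges V E n T. x i e \<le> 1) \<and>
     (\<forall>e\<in>tx_edges V E n T. (\<Sum>i<n. x i e) \<le> 1) \<and>
     (\<forall>i<n. \<forall>j<n. i \<noteq> j \<longrightarrow> x i (LoopE j) = 0) \<and>
     (\<forall>w. \<forall>i<n.
        (\<Sum>e\<in>{e \<in> tx_edges V E n T. tx_tgt xI e = w}. x i e) =
        (\<Sum>e\<in>{e \<in> tx_edges V E n T. tx_src xG T e = w}. x i e))"

definition ilp_obj :: "nat \<Rightarrow> (nat \<Rightarrow> 'v tedge \<Rightarrow> nat) \<Rightarrow> nat" where
  "ilp_obj n x = (\<Sum>i<n. x i (LoopE i))"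

definition ilp_opt ::
  "'v set \<Rightarrow> ('v \<times> 'v) set \<Rightarrow> nat \<Rightarrow> (nat \<Rightarrow> 'v) \<Rightarrow> (nat \<Rightarrow> 'v) \<Rightarrow> nat \<Rightarrow> nat" where
  "ilp_opt V E n xI xG T = Max {ilp_obj n x | x. ilp_feasible V E n xI xG T x}"

definition ilp_optimal ::
  "'v set \<Rightarrow> ('v \<times> 'v) set \<Rightarrow> nat \<Rightarrow> (nat \<Rightarrow> 'v) \<Rightarrow> (nat \<Rightarrow> 'v) \<Rightarrow> nat
     \<Rightarrow> (nat \<Rightarrow> 'v tedge \<Rightarrow> nat) \<Rightarrow> bool" where
  "ilp_optimal V E n xI xG T x \<longleftrightarrow>
     ilp_feasible V E n xI xG T x \<and> ilp_obj n x = ilp_opt V E n xI xG T"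

definition flow_through ::
  "'v set \<Rightarrow> ('v \<times> 'v) set \<Rightarrow> nat \<Rightarrow> (nat \<Rightarrow> 'v) \<Rightarrow> nat
     \<Rightarrow> (nat \<Rightarrow> 'v tedge \<Rightarrow> nat) \<Rightarrow> nat \<Rightarrow> 'v tnode \<Rightarrow> bool" where
  "flow_through V E n xI T x i w \<longleftrightarrow> (\<exists>e\<in>tx_edges V E n T. tx_tgt xI e = w \<and> x i e = 1)"

definition tnode_at :: "'v \<Rightarrow> nat \<Rightarrow> 'v tnode" where
  "tnode_at v t = (if t = 0 then TOut v 0 else TIn v t)"

definition extract_paths ::
  "'v set \<Rightarrow> ('v \<times> 'v) set \<Rightarrow> nat \<Rightarrow> (nat \<Rightarrow> 'v) \<Rightarrow> (nat \<Rightarrow> 'v) \<Rightarrow> nat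
     \<Rightarrow> (nat \<Rightarrow> 'v tedge \<Rightarrow> nat) \<Rightarrow> nat \<Rightarrow> nat \<Rightarrow> 'v" where
  "extract_paths V E n xI xG T x = (\<lambda>i t.
     if t \<le> T then (SOME v. v \<in> V \<and> flow_through V E n xI T x i (tnode_at v t)) else xG i)"

definition tompp_start :: "('v \<times> 'v) set \<Rightarrow> nat \<Rightarrow> (nat \<Rightarrow> 'v) \<Rightarrow> (nat \<Rightarrow> 'v) \<Rightarrow> nat" where
  "tompp_start E n xI xG = Max (insert 0 {gdist E (xI i) (xG i) | i. i < n})"

text \<open>Bound on T: the number of joint configurations is at most |V|^n.\<close>
definition tompp_bound :: "'v set \<Rightarrow> nat \<Rightarrow> nat" where
  "tompp_bound V n = card V ^ n"

text \<open>tompp_result ... res: res is a possible output of TOMPP (the ILP solver may return any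
  optimal solution). Some P: paths P returned; None: "no solution exists" reported.\<close>
definition tompp_result ::
  "'v set \<Rightarrow> ('v \<times> 'v) set \<Rightarrow> nat \<Rightarrow> (nat \<Rightarrow> 'v) \<Rightarrow> (nat \<Rightarrow> 'v)
     \<Rightarrow> (nat \<Rightarrow> nat \<Rightarrow> 'v) option \<Rightarrow> bool" where
  "tompp_result V E n xI xG res \<longleftrightarrow>
     (case res of
       Some P \<Rightarrow> (\<exists>T x. tompp_start E n xI xG \<le> T \<and> T \<le> tompp_bound V n \<and>
                  (\<forall>T'. tompp_start E n xI xG \<le> T' \<and> T' < T \<longrightarrow> ilp_opt V E n xI xG T' \<noteq> n) \<and>
                  ilp_opt V E n xI xG T = n \<and> ilp_optimal V E n xI xG T x \<and>
                  P = extract_paths V E n xI xG T x)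
     | None \<Rightarrow> (\<forall>T. tompp_start E n xI xG \<le> T \<and> T \<le> tompp_bound V n \<longrightarrow>
                  ilp_opt V E n xI xG T \<noteq> n))"

end

theory Submission
  imports Defs "HOL-Library.FuncSet"
begin

(*
  A flow of value n in the time-expanded network for horizon T is the same thing as a solution
  of makespan at most T. Unit capacities force the flow of commodity i to be a single path
  through the copies v(0), v(1), ..., v(T) linked by holdover edges and edge gadgets; read off
  at these copies it is a feasible robot path. The holdover edge v(t) -> v(t)' carries at most
  one robot, so no two robots meet at a vertex, and the single edge a -> b of the gadget of
  {u, v} carries at most one robot, so no two robots swap along an edge. Conversely every
  solution routes its robots through the network in this way.

  Hence the ILP for T reaches n exactly when some solution has makespan at most T, a property
  monotone in T that fails below the largest distance d(x_I(r), x_G(r)). The first horizon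
  reached by TOMPP is therefore the minimum makespan, and it does not exceed |V|^n: a solution
  of minimum makespan never repeats a joint configuration, since cutting out the loop between
  two repetitions would shorten it.
*)

lemma tx_edges_iff [simp]:
  "LoopE j \<in> tx_edges V E n T \<longleftrightarrow> j < n"
  "HoldE v t \<in> tx_edges V E n T \<longleftrightarrow> v \<in> V \<and> 1 \<le> t \<and> t \<le> T"
  "MoveE v t \<in> tx_edges V E n T \<longleftrightarrow> v \<in> V \<and> t < T"
  "GInE w f t \<in> tx_edges V E n T \<longleftrightarrow> f \<in> uedges E \<and> w \<in> f \<and> t < T"
  "GMidE f t \<in> tx_edges V E n T \<longleftrightarrow> f \<in> uedges E \<and> t < T"
  "GOutE f w t \<in> tx_edges V E n T \<longleftrightarrow> f \<in> uedges E \<and> w \<in> f \<and> t < T"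
  by (auto simp: tx_edges_def)

lemma tx_src_eq_iff:
  "tx_src xG T e = TIn v t \<longleftrightarrow> e = HoldE v t"
  "tx_src xG T e = TOut v t \<longleftrightarrow>
     (\<exists>j. e = LoopE j \<and> v = xG j \<and> t = T) \<or> e = MoveE v t \<or> (\<exists>f. e = GInE v f t)"
  "tx_src xG T e = GadA f t \<longleftrightarrow> e = GMidE f t"
  "tx_src xG T e = GadB f t \<longleftrightarrow> (\<exists>w. e = GOutE f w t)"
  by (cases e; auto)+

lemma tx_tgt_eq_iff:
  "tx_tgt xI e = TIn v t \<longleftrightarrow> (\<exists>s. t = Suc s \<and> (e = MoveE v s \<or> (\<exists>f. e = GOutE f v s)))"
  "tx_tgt xI e = TOut v t \<longleftrightarrow> e = HoldE v t \<or> (\<exists>j. e = LoopE j \<and> v = xI j \<and> t = 0)"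
  "tx_tgt xI e = GadA f t \<longleftrightarrow> (\<exists>w. e = GInE w f t)"
  "tx_tgt xI e = GadB f t \<longleftrightarrow> e = GMidE f t"
  by (cases e; auto)+

lemma uedges_subset: "E \<subseteq> V \<times> V \<Longrightarrow> f \<in> uedges E \<Longrightarrow> f \<subseteq> V"
  by (auto simp: uedges_def)

lemma uedges_eq_doubleton: "f \<in> uedges E \<Longrightarrow> u \<in> f \<Longrightarrow> v \<in> f \<Longrightarrow> u \<noteq> v \<Longrightarrow> f = {u, v}"
  by (auto simp: uedges_def)

lemma uedges_edge: "sym E \<Longrightarrow> f \<in> uedges E \<Longrightarrow> u \<in> f \<Longrightarrow> v \<in> f \<Longrightarrow> u \<noteq> v \<Longrightarrow> (u, v) \<in> E"
  by (auto simp: uedges_def dest: symD)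

lemma doubleton_in_uedges: "(u, v) \<in> E \<Longrightarrow> {u, v} \<in> uedges E"
  by (auto simp: uedges_def)

lemma uedges_image: "uedges E = (\<lambda>(u, v). {u, v}) ` E"
  by (auto simp: uedges_def)

lemma finite_uedges: "finite E \<Longrightarrow> finite (uedges E)"
  by (simp add: uedges_image)

lemma finite_tx_edges:
  assumes "finite V" and "E \<subseteq> V \<times> V"
  shows "finite (tx_edges V E n T)"
proof -
  have "finite (uedges E)" using assms finite_subset finite_uedges by blast
  moreover have "tx_edges V E n T \<subseteq>
      LoopE ` {..<n} \<union> (\<lambda>(v, t). HoldE v t) ` (V \<times> {..T}) \<union>
      (\<lambda>(v, t). MoveE v t) ` (V \<times> {..<T}) \<union>
      (\<lambda>(w, f, t). GInE w f t) ` (V \<times> uedges E \<times> {..<T}) \<union>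
      (\<lambda>(f, t). GMidE f t) ` (uedges E \<times> {..<T}) \<union>
      (\<lambda>(f, w, t). GOutE f w t) ` (uedges E \<times> V \<times> {..<T})"
    using uedges_subset[OF assms(2)] by (auto simp: tx_edges_def image_iff) blast+
  ultimately show ?thesis using assms(1) finite_subset by fastforce
qed

lemma mpp_instance_finite_tx_edges: "mpp_instance V E n xI xG \<Longrightarrow> finite (tx_edges V E n T)"
  by (auto simp: mpp_instance_def simple_connected_graph_def intro: finite_tx_edges)

lemma sum_eq_single:
  assumes "finite A" and "\<And>a. a \<in> A \<Longrightarrow> a \<noteq> a0 \<Longrightarrow> f a = 0"
  shows "sum f A = (if a0 \<in> A then f a0 else 0)"
proof -
  have "sum f A = (\<Sum>a\<in>A. if a = a0 then f a else 0)"
    using assms(2) by (intro sum.cong) auto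
  then show ?thesis using assms(1) by simp
qed

lemma sum_nat_le_one_unique:
  fixes f :: "'a \<Rightarrow> nat"
  assumes "finite A" "sum f A \<le> 1" "a \<in> A" "b \<in> A" "f a \<noteq> 0" "f b \<noteq> 0"
  shows "a = b"
proof (rule ccontr)
  assume "a \<noteq> b"
  then have "f a + f b = sum f {a, b}" by simp
  also have "\<dots> \<le> sum f A" using assms(1,3,4) by (intro sum_mono2) auto
  finally have "f a + f b \<le> sum f A" .
  then show False using assms(2,5,6) by linarith
qed

lemma sum_indicator_unique:
  assumes "finite A" and "\<And>a b. a \<in> A \<Longrightarrow> b \<in> A \<Longrightarrow> P a \<Longrightarrow> P b \<Longrightarrow> a = b"
  shows "(\<Sum>a\<in>A. if P a then 1 else 0) = (if \<exists>a\<in>A. P a then 1 else (0::nat))"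
proof (cases "\<exists>a\<in>A. P a")
  case True
  then obtain a0 where "a0 \<in> A" "P a0" by blast
  then have "(\<Sum>a\<in>A. if P a then 1 else 0) = (if a0 \<in> A then 1 else (0::nat))"
    using assms by (subst sum_eq_single[of A a0]) auto
  with \<open>a0 \<in> A\<close> True show ?thesis by simp
qed simp

locale saturated_flow =
  fixes V :: "'v set" and E :: "('v \<times> 'v) set" and n :: nat and xI xG :: "nat \<Rightarrow> 'v"
    and T :: nat and x :: "nat \<Rightarrow> 'v tedge \<Rightarrow> nat"
  assumes mpp: "mpp_instance V E n xI xG"
    and feasible: "ilp_feasible V E n xI xG T x"
    and saturated: "\<And>i. i < n \<Longrightarrow> x i (LoopE i) = 1"
begin

abbreviation network :: "'v tedge set" where
  "network \<equiv> tx_edges V E n T"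

abbreviation visits :: "nat \<Rightarrow> 'v tnode \<Rightarrow> bool" where
  "visits \<equiv> flow_through V E n xI T x"

lemma finite_network: "finite network"
  using mpp by (rule mpp_instance_finite_tx_edges)

lemma E_subset: "E \<subseteq> V \<times> V" and sym_E: "sym E"
  using mpp by (auto simp: mpp_instance_def simple_connected_graph_def)

lemma x_outside: "n \<le> i \<or> e \<notin> network \<Longrightarrow> x i e = 0"
  using feasible unfolding ilp_feasible_def by blast

lemma x_le_one: "x i e \<le> 1"
  using feasible x_outside[of i e] unfolding ilp_feasible_def by (cases "i < n \<and> e \<in> network") auto

lemma x_nonzero_iff: "x i e \<noteq> 0 \<longleftrightarrow> x i e = 1"
  using x_le_one[of i e] by linarith

lemma x_one_in_network: "x i e = 1 \<Longrightarrow> e \<in> network"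
  and x_one_robot: "x i e = 1 \<Longrightarrow> i < n"
  using x_outside[of i e] by fastforce+

lemma conservation:
  "i < n \<Longrightarrow>
    (\<Sum>e\<in>{e \<in> network. tx_tgt xI e = w}. x i e) = (\<Sum>e\<in>{e \<in> network. tx_src xG T e = w}. x i e)"
  using feasible unfolding ilp_feasible_def by blast

lemma x_one_exclusive: "x i e = 1 \<Longrightarrow> x j e = 1 \<Longrightarrow> i = j"
proof -
  assume xi: "x i e = 1" and xj: "x j e = 1"
  have "(\<Sum>k<n. x k e) \<le> 1"
    using feasible x_one_in_network[OF xi] unfolding ilp_feasible_def by blast
  then show "i = j"
    using sum_nat_le_one_unique[of "{..<n}" "\<lambda>k. x k e" i j] xi xj x_one_robot by auto
qed

lemma x_one_LoopE: "x i (LoopE j) = 1 \<Longrightarrow> j = i"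
  using feasible x_one_robot x_one_in_network unfolding ilp_feasible_def by fastforce

lemma visits_tgt: "x i e = 1 \<Longrightarrow> visits i (tx_tgt xI e)"
  using x_one_in_network by (auto simp: flow_through_def)

lemma visits_entered: "visits i w \<Longrightarrow> \<exists>e. tx_tgt xI e = w \<and> x i e = 1"
  by (auto simp: flow_through_def)

lemma enters_iff_leaves:
  assumes "i < n"
  shows "(\<exists>e. tx_tgt xI e = w \<and> x i e = 1) \<longleftrightarrow> (\<exists>e. tx_src xG T e = w \<and> x i e = 1)"
proof -
  have pos: "(\<Sum>e\<in>{e \<in> network. P e}. x i e) \<noteq> 0 \<longleftrightarrow> (\<exists>e. P e \<and> x i e = 1)" for P
  proof
    assume "(\<Sum>e\<in>{e \<in> network. P e}. x i e) \<noteq> 0"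
    then obtain e where "e \<in> {e \<in> network. P e}" "x i e \<noteq> 0"
      by (rule sum.not_neutral_contains_not_neutral)
    then show "\<exists>e. P e \<and> x i e = 1" using x_nonzero_iff by auto
  next
    assume "\<exists>e. P e \<and> x i e = 1"
    then obtain e where "P e" "x i e = 1" by blast
    then show "(\<Sum>e\<in>{e \<in> network. P e}. x i e) \<noteq> 0"
      using finite_network x_one_in_network[of i e] by (subst sum_eq_0_iff) auto
  qed
  show ?thesis
    using pos[of "\<lambda>e. tx_tgt xI e = w"] pos[of "\<lambda>e. tx_src xG T e = w"] conservation[OF assms]
    by simp
qed

lemma visits_left: "visits i w \<Longrightarrow> \<exists>e. tx_src xG T e = w \<and> x i e = 1"
proof -
  assume "visits i w"
  then obtain e where "tx_tgt xI e = w" "x i e = 1" using visits_entered by blast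
  then show ?thesis using enters_iff_leaves[OF x_one_robot] by blast
qed

lemma visits_src: "x i e = 1 \<Longrightarrow> visits i (tx_src xG T e)"
proof -
  assume "x i e = 1"
  then obtain e' where "tx_tgt xI e' = tx_src xG T e" "x i e' = 1"
    using enters_iff_leaves[OF x_one_robot] by blast
  then show ?thesis using visits_tgt by fastforce
qed

lemma inflow_le_one: "i < n \<Longrightarrow> (\<Sum>e\<in>{e \<in> network. tx_tgt xI e = w}. x i e) \<le> 1"
proof -
  assume i: "i < n"
  have sum_le: "(\<Sum>e\<in>{e \<in> network. P e}. x i e) \<le> 1"
    if "\<And>e. P e \<Longrightarrow> x i e = 1 \<Longrightarrow> e = e0" for P e0
    using finite_network that x_nonzero_iff x_le_one[of i e0]
    by (subst sum_eq_single[of _ e0]) auto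
  show ?thesis
  proof (cases w)
    case (TIn v t)
    then show ?thesis
      using conservation[OF i] sum_le[of "\<lambda>e. tx_src xG T e = w" "HoldE v t"]
      by (simp add: tx_src_eq_iff)
  next
    case (TOut v t)
    show ?thesis
    proof (intro sum_le[of _ "if t = 0 then LoopE i else HoldE v t"])
      fix e assume "tx_tgt xI e = w" "x i e = 1"
      then show "e = (if t = 0 then LoopE i else HoldE v t)"
        using TOut x_one_LoopE x_one_in_network[of i e] by (auto simp: tx_tgt_eq_iff)
    qed
  next
    case (GadA f t)
    then show ?thesis
      using conservation[OF i] sum_le[of "\<lambda>e. tx_src xG T e = w" "GMidE f t"]
      by (simp add: tx_src_eq_iff)
  next
    case (GadB f t)
    then show ?thesis
      using sum_le[of "\<lambda>e. tx_tgt xI e = w" "GMidE f t"] by (simp add: tx_tgt_eq_iff)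
  qed
qed

lemma leaving_unique:
  assumes "x i e1 = 1" "x i e2 = 1" "tx_src xG T e1 = tx_src xG T e2"
  shows "e1 = e2"
proof -
  have "(\<Sum>e\<in>{e \<in> network. tx_src xG T e = tx_src xG T e1}. x i e) \<le> 1"
    using inflow_le_one conservation x_one_robot[OF assms(1)] by simp
  then show ?thesis
    using assms finite_network x_one_in_network[of i]
    by (intro sum_nat_le_one_unique[of "{e \<in> network. tx_src xG T e = tx_src xG T e1}" "x i"]) auto
qed

definition located :: "nat \<Rightarrow> nat \<Rightarrow> 'v \<Rightarrow> bool" where
  "located i t v \<longleftrightarrow> visits i (tnode_at v t)"

definition moves :: "nat \<Rightarrow> 'v \<Rightarrow> nat \<Rightarrow> 'v \<Rightarrow> bool" where
  "moves i u t v \<longleftrightarrow>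
     (x i (MoveE u t) = 1 \<and> v = u) \<or> (\<exists>f. x i (GInE u f t) = 1 \<and> x i (GOutE f v t) = 1)"

lemma located_robot: "located i t v \<Longrightarrow> i < n"
  using visits_entered x_one_robot by (auto simp: located_def)

lemma located_HoldE: "located i t v \<Longrightarrow> 0 < t \<Longrightarrow> x i (HoldE v t) = 1"
proof -
  assume "located i t v" "0 < t"
  then obtain e where "tx_src xG T e = TIn v t" "x i e = 1"
    using visits_left by (auto simp: located_def tnode_at_def)
  then show ?thesis by (simp add: tx_src_eq_iff)
qed

lemma located_visits_TOut: "located i t u \<Longrightarrow> visits i (TOut u t)"
  using located_HoldE visits_tgt by (cases "t = 0") (fastforce simp: located_def tnode_at_def)+

lemma visits_TOut_located: "visits i (TOut u t) \<Longrightarrow> located i t u"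
proof (cases "t = 0")
  case False
  assume "visits i (TOut u t)"
  then obtain e where "tx_tgt xI e = TOut u t" "x i e = 1" using visits_entered by blast
  with False have "x i (HoldE u t) = 1" by (auto simp: tx_tgt_eq_iff)
  then have "visits i (TIn u t)" using visits_src by fastforce
  then show ?thesis using False by (simp add: located_def tnode_at_def)
qed (simp add: located_def tnode_at_def)

lemma located_forward:
  assumes "located i t u" and "t < T"
  shows "\<exists>v. located i (Suc t) v \<and> moves i u t v"
proof -
  obtain e where e: "tx_src xG T e = TOut u t" "x i e = 1"
    using visits_left[OF located_visits_TOut[OF assms(1)]] by blast
  then consider "e = MoveE u t" | f where "e = GInE u f t"
    using assms(2) by (auto simp: tx_src_eq_iff)
  then show ?thesis
  proof cases
    case 1
    then show ?thesis
      using e(2) visits_tgt[OF e(2)] by (auto simp: located_def tnode_at_def moves_def)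
  next
    case (2 f)
    then have "x i (GMidE f t) = 1"
      using visits_left[OF visits_tgt[OF e(2)]] by (auto simp: tx_src_eq_iff)
    then obtain v where v: "x i (GOutE f v t) = 1"
      using visits_left[OF visits_tgt] by (fastforce simp: tx_src_eq_iff)
    then show ?thesis
      using visits_tgt[OF v] e(2) 2 by (auto simp: located_def tnode_at_def moves_def)
  qed
qed

lemma located_backward:
  assumes "located i (Suc t) v"
  shows "\<exists>u. located i t u \<and> moves i u t v"
proof -
  obtain e where e: "tx_tgt xI e = TIn v (Suc t)" "x i e = 1"
    using visits_entered assms by (auto simp: located_def tnode_at_def)
  then consider "e = MoveE v t" | f where "e = GOutE f v t"
    by (auto simp: tx_tgt_eq_iff)
  then show ?thesis
  proof cases
    case 1
    then show ?thesis
      using e(2) visits_src[OF e(2)] visits_TOut_located by (auto simp: moves_def)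
  next
    case (2 f)
    then have "x i (GMidE f t) = 1"
      using visits_entered[OF visits_src[OF e(2)]] by (auto simp: tx_tgt_eq_iff)
    then obtain u where u: "x i (GInE u f t) = 1"
      using visits_entered[OF visits_src] by (fastforce simp: tx_tgt_eq_iff)
    then show ?thesis
      using visits_src[OF u] visits_TOut_located e(2) 2 by (auto simp: moves_def)
  qed
qed

lemma moves_deterministic:
  assumes "moves i u t v" and "moves i u t v'"
  shows "v = v'"
proof (cases "x i (MoveE u t) = 1")
  case True
  then have "x i (GInE u f t) \<noteq> 1" for f
    using leaving_unique[OF True, of "GInE u f t"] by auto
  then show ?thesis using assms by (auto simp: moves_def)
next
  case False
  then obtain f f' where f: "x i (GInE u f t) = 1" "x i (GOutE f v t) = 1"
      and f': "x i (GInE u f' t) = 1" "x i (GOutE f' v' t) = 1"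
    using assms by (auto simp: moves_def)
  then have "f = f'" using leaving_unique[OF f(1) f'(1)] by simp
  then show ?thesis using leaving_unique[OF f(2) f'(2)] by simp
qed

lemma located_0_iff: "i < n \<Longrightarrow> located i 0 v \<longleftrightarrow> v = xI i"
proof
  assume "located i 0 v"
  then obtain e where "tx_tgt xI e = TOut v 0" "x i e = 1"
    using visits_entered by (auto simp: located_def tnode_at_def)
  then show "v = xI i"
    using x_one_LoopE x_one_in_network[of i "HoldE v 0"] by (auto simp: tx_tgt_eq_iff)
next
  assume "i < n" "v = xI i"
  then show "located i 0 v"
    using visits_tgt[OF saturated] by (simp add: located_def tnode_at_def)
qed

lemma located_unique: "located i t v \<Longrightarrow> located i t v' \<Longrightarrow> v = v'"
proof (induction t arbitrary: v v')
  case 0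
  then obtain e where "x i e = 1" using visits_entered by (auto simp: located_def)
  then show ?case using 0 located_0_iff[OF x_one_robot] by metis
next
  case (Suc t)
  then obtain u u' where "located i t u" "moves i u t v" "located i t u'" "moves i u' t v'"
    using located_backward by meson
  then show ?case using Suc.IH moves_deterministic by blast
qed

lemma located_exists: "i < n \<Longrightarrow> t \<le> T \<Longrightarrow> \<exists>v. located i t v"
proof (induction t)
  case 0
  then show ?case using located_0_iff by blast
next
  case (Suc t)
  then show ?case using located_forward by (meson Suc_leD Suc_le_lessD)
qed

lemma located_T: "i < n \<Longrightarrow> located i T (xG i)"
  using visits_src[OF saturated] visits_TOut_located by simp

lemma located_in_V: "located i t v \<Longrightarrow> v \<in> V"
proof (cases t)
  case 0
  assume "located i t v"
  then have "i < n" using located_robot by blast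
  with \<open>located i t v\<close> have "v = xI i" using located_0_iff 0 by blast
  then show ?thesis using \<open>i < n\<close> mpp by (simp add: mpp_instance_def)
next
  case (Suc s)
  assume "located i t v"
  then obtain u where "moves i u s v" using located_backward Suc by blast
  then consider "x i (MoveE v s) = 1" | f where "x i (GOutE f v s) = 1"
    by (auto simp: moves_def)
  then show ?thesis
  proof cases
    case 1
    then show ?thesis using x_one_in_network[OF 1] by simp
  next
    case (2 f)
    then have "f \<in> uedges E" "v \<in> f" using x_one_in_network[OF 2] by simp_all
    then show ?thesis using uedges_subset[OF E_subset] by blast
  qed
qed

lemma moves_edge:
  assumes "moves i u t v"
  shows "u = v \<or> (u, v) \<in> E"
proof (cases "u = v")
  case False
  with assms obtain f where "x i (GInE u f t) = 1" "x i (GOutE f v t) = 1"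
    by (auto simp: moves_def)
  then have "f \<in> uedges E" "u \<in> f" "v \<in> f"
    using x_one_in_network[of i "GInE u f t"] x_one_in_network[of i "GOutE f v t"] by simp_all
  then show ?thesis using uedges_edge[OF sym_E] by blast
qed simp

lemma moves_gadget:
  assumes "moves i u t v" and "u \<noteq> v"
  shows "x i (GMidE {u, v} t) = 1"
proof -
  obtain f where f: "x i (GInE u f t) = 1" "x i (GOutE f v t) = 1"
    using assms by (auto simp: moves_def)
  then have "f \<in> uedges E" "u \<in> f" "v \<in> f"
    using x_one_in_network[of i "GInE u f t"] x_one_in_network[of i "GOutE f v t"] by simp_all
  then have "f = {u, v}" using assms(2) by (intro uedges_eq_doubleton)
  moreover have "x i (GMidE f t) = 1"
    using visits_left[OF visits_tgt[OF f(1)]] by (auto simp: tx_src_eq_iff)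
  ultimately show ?thesis by simp
qed

lemma located_Suc_moves:
  assumes "located i t u" and "located i (Suc t) v"
  shows "moves i u t v"
proof -
  obtain u' where "located i t u'" "moves i u' t v" using located_backward[OF assms(2)] by blast
  then show ?thesis using located_unique[OF assms(1)] by simp
qed

lemma located_exclusive: "located i t v \<Longrightarrow> located j t v \<Longrightarrow> i = j"
proof (cases "t = 0")
  case True
  assume "located i t v" "located j t v"
  moreover have "i < n" "j < n" using calculation located_robot by blast+
  ultimately have "xI i = xI j" using True located_0_iff by simp
  then show "i = j"
    using mpp \<open>i < n\<close> \<open>j < n\<close> by (auto simp: mpp_instance_def dest: inj_onD)
next
  case False
  assume "located i t v" "located j t v"
  then have "x i (HoldE v t) = 1" "x j (HoldE v t) = 1" using located_HoldE False by simp_all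
  then show "i = j" by (rule x_one_exclusive)
qed

abbreviation paths :: "nat \<Rightarrow> nat \<Rightarrow> 'v" where
  "paths \<equiv> extract_paths V E n xI xG T x"

lemma located_paths: "i < n \<Longrightarrow> t \<le> T \<Longrightarrow> located i t (paths i t)"
proof -
  assume "i < n" "t \<le> T"
  then obtain v where "located i t v" using located_exists by blast
  then have "located i t (SOME v. v \<in> V \<and> located i t v)"
    using located_in_V someI[of "\<lambda>v. v \<in> V \<and> located i t v"] by blast
  moreover have "paths i t = (SOME v. v \<in> V \<and> located i t v)"
    using \<open>t \<le> T\<close> by (simp add: extract_paths_def located_def)
  ultimately show ?thesis by simp
qed

lemma paths_after_T: "i < n \<Longrightarrow> T \<le> t \<Longrightarrow> paths i t = xG i"
proof (cases "t = T")
  case True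
  assume "i < n"
  then show ?thesis using located_unique located_paths located_T True by blast
qed (simp add: extract_paths_def)

lemma paths_moves: "i < n \<Longrightarrow> t < T \<Longrightarrow> moves i (paths i t) t (paths i (Suc t))"
  using located_Suc_moves located_paths by simp

lemma paths_feasible: "i < n \<Longrightarrow> feasible_path E (xI i) (xG i) (paths i)"
proof -
  assume i: "i < n"
  have "paths i t = paths i (Suc t) \<or> (paths i t, paths i (Suc t)) \<in> E" for t
    using moves_edge[OF paths_moves[OF i]] paths_after_T[OF i] by (cases "t < T") auto
  moreover have "paths i 0 = xI i" using located_paths[OF i, of 0] located_0_iff[OF i] by simp
  ultimately show ?thesis using paths_after_T[OF i] by (auto simp: feasible_path_def)
qed

lemma paths_distinct: "i < n \<Longrightarrow> j < n \<Longrightarrow> i \<noteq> j \<Longrightarrow> paths i t \<noteq> paths j t"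
proof (cases "t \<le> T")
  case True
  assume "i \<noteq> j" "i < n" "j < n"
  then show ?thesis using located_exclusive located_paths True by metis
next
  case False
  assume "i \<noteq> j" "i < n" "j < n"
  then show ?thesis using paths_after_T False mpp by (auto simp: mpp_instance_def dest: inj_onD)
qed

lemma paths_no_swap:
  assumes "i < n" "j < n" "i \<noteq> j"
  shows "(paths i t, paths i (Suc t)) \<noteq> (paths j (Suc t), paths j t)"
proof
  assume swap: "(paths i t, paths i (Suc t)) = (paths j (Suc t), paths j t)"
  define u v where "u = paths i t" and "v = paths i (Suc t)"
  have "u \<noteq> v" using swap paths_distinct[OF assms] unfolding u_def v_def by auto
  then have "t < T"
    using paths_after_T[OF assms(1)] unfolding u_def v_def by (metis le_SucI not_less)
  moreover have "moves i u t v" "moves j v t u"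
    using paths_moves[OF assms(1) \<open>t < T\<close>] paths_moves[OF assms(2) \<open>t < T\<close>] swap
    unfolding u_def v_def by simp_all
  ultimately have "x i (GMidE {u, v} t) = 1" "x j (GMidE {v, u} t) = 1"
    using moves_gadget \<open>u \<noteq> v\<close> by auto
  then show False using x_one_exclusive assms(3) by (simp add: insert_commute)
qed

lemma paths_solution: "is_solution E n xI xG paths"
  using paths_feasible paths_distinct paths_no_swap by (auto simp: is_solution_def collide_def)

lemma paths_makespan: "makespan n xG paths \<le> T"
proof -
  have "kmin (paths i) (xG i) \<le> T" if "i < n" for i
    unfolding kmin_def using paths_after_T[OF that] by (intro Least_le) simp
  then show ?thesis by (auto simp: makespan_def)
qed

end

lemma feasible_path_at_goal: "feasible_path E s g p \<Longrightarrow> kmin p g \<le> k \<Longrightarrow> p k = g"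
proof -
  assume f: "feasible_path E s g p" and k: "kmin p g \<le> k"
  from f obtain k0 where "\<forall>k'\<ge>k0. p k' = g" unfolding feasible_path_def by blast
  then have "\<forall>k'\<ge>kmin p g. p k' = g" unfolding kmin_def by (rule LeastI)
  then show ?thesis using k by blast
qed

lemma feasible_path_step: "feasible_path E s g p \<Longrightarrow> p k = p (Suc k) \<or> (p k, p (Suc k)) \<in> E"
  using feasible_path_at_goal[of E s g p k] feasible_path_at_goal[of E s g p "Suc k"]
  by (cases "k < kmin p g") (auto simp: feasible_path_def)

lemma feasible_path_in_V: "feasible_path E s g p \<Longrightarrow> E \<subseteq> V \<times> V \<Longrightarrow> s \<in> V \<Longrightarrow> p k \<in> V"
proof (induction k)
  case 0
  then show ?case by (simp add: feasible_path_def)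
next
  case (Suc k)
  then show ?case using feasible_path_step[OF Suc.prems(1), of k] by auto
qed

lemma kmin_le_makespan: "i < n \<Longrightarrow> kmin (Q i) (xG i) \<le> makespan n xG Q"
  unfolding makespan_def by (intro Max_ge) auto

fun traverses :: "(nat \<Rightarrow> nat \<Rightarrow> 'v) \<Rightarrow> nat \<Rightarrow> 'v tedge \<Rightarrow> bool" where
  "traverses Q i (LoopE j) \<longleftrightarrow> j = i"
| "traverses Q i (HoldE v t) \<longleftrightarrow> Q i t = v"
| "traverses Q i (MoveE v t) \<longleftrightarrow> Q i t = v \<and> Q i (Suc t) = v"
| "traverses Q i (GInE w f t) \<longleftrightarrow> Q i t = w \<and> Q i (Suc t) \<noteq> w \<and> f = {w, Q i (Suc t)}"
| "traverses Q i (GMidE f t) \<longleftrightarrow> Q i t \<noteq> Q i (Suc t) \<and> f = {Q i t, Q i (Suc t)}"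
| "traverses Q i (GOutE f w t) \<longleftrightarrow> Q i t \<noteq> w \<and> Q i (Suc t) = w \<and> f = {Q i t, w}"

lemma traverses_exclusive:
  assumes "\<not> collide (Q i) (Q j)" and "traverses Q i e" and "traverses Q j e"
  shows "i = j"
proof -
  have same: "Q i k \<noteq> Q j k" "Q j k \<noteq> Q i k"
    and swap: "\<not> (Q i k = Q j (Suc k) \<and> Q i (Suc k) = Q j k)" for k
    using assms(1) unfolding collide_def by (blast, metis, blast)
  show ?thesis
  proof (cases e)
    case (GMidE f t)
    then have "{Q i t, Q i (Suc t)} = {Q j t, Q j (Suc t)}" using assms(2,3) by simp
    then show ?thesis using same[of t] swap[of t] by (auto simp: doubleton_eq_iff)
  qed (use assms(2,3) same in auto)
qed

locale makespan_bounded_solution =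
  fixes V :: "'v set" and E :: "('v \<times> 'v) set" and n :: nat and xI xG :: "nat \<Rightarrow> 'v"
    and Q :: "nat \<Rightarrow> nat \<Rightarrow> 'v" and T :: nat
  assumes mpp: "mpp_instance V E n xI xG"
    and solution: "is_solution E n xI xG Q"
    and makespan_le: "makespan n xG Q \<le> T"
begin

abbreviation network :: "'v tedge set" where
  "network \<equiv> tx_edges V E n T"

lemma finite_network: "finite network"
  using mpp by (rule mpp_instance_finite_tx_edges)

lemma path_feasible: "i < n \<Longrightarrow> feasible_path E (xI i) (xG i) (Q i)"
  using solution by (simp add: is_solution_def)

lemma path_0: "i < n \<Longrightarrow> Q i 0 = xI i"
  using path_feasible by (simp add: feasible_path_def)

lemma path_after_T: "i < n \<Longrightarrow> T \<le> t \<Longrightarrow> Q i t = xG i"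
  using feasible_path_at_goal[OF path_feasible] kmin_le_makespan[where Q = Q] makespan_le
  by (meson le_trans)

lemma path_in_V: "i < n \<Longrightarrow> Q i t \<in> V"
  using feasible_path_in_V[OF path_feasible] mpp
  by (simp add: mpp_instance_def simple_connected_graph_def)

lemma path_move:
  assumes "i < n" and "Q i t \<noteq> Q i (Suc t)"
  shows "t < T" and "{Q i t, Q i (Suc t)} \<in> uedges E"
  using assms path_after_T[OF assms(1), of t] path_after_T[OF assms(1), of "Suc t"]
    feasible_path_step[OF path_feasible[OF assms(1)], of t] doubleton_in_uedges
  by (force, auto)

definition path_flow :: "nat \<Rightarrow> 'v tedge \<Rightarrow> nat" where
  "path_flow i e = (if i < n \<and> e \<in> network \<and> traverses Q i e then 1 else 0)"

definition occupies :: "nat \<Rightarrow> 'v tnode \<Rightarrow> bool" where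
  "occupies i w \<longleftrightarrow> (case w of
       TIn v t \<Rightarrow> 0 < t \<and> t \<le> T \<and> Q i t = v
     | TOut v t \<Rightarrow> t \<le> T \<and> Q i t = v
     | GadA f t \<Rightarrow> t < T \<and> Q i t \<noteq> Q i (Suc t) \<and> f = {Q i t, Q i (Suc t)}
     | GadB f t \<Rightarrow> t < T \<and> Q i t \<noteq> Q i (Suc t) \<and> f = {Q i t, Q i (Suc t)})"

lemma enters_iff_occupies:
  assumes "i < n"
  shows "(\<exists>e\<in>network. traverses Q i e \<and> tx_tgt xI e = w) \<longleftrightarrow> occupies i w"
proof (cases w)
  case (TIn v t)
  show ?thesis
  proof
    assume "occupies i w"
    then obtain s where s: "t = Suc s" "s < T" "Q i (Suc s) = v"
      using TIn by (cases t) (auto simp: occupies_def)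
    show "\<exists>e\<in>network. traverses Q i e \<and> tx_tgt xI e = w"
    proof (cases "Q i s = v")
      case True
      then show ?thesis using s TIn path_in_V[OF assms] by (intro bexI[of _ "MoveE v s"]) auto
    next
      case False
      then show ?thesis
        using s TIn path_move[OF assms, of s] by (intro bexI[of _ "GOutE {Q i s, v} v s"]) auto
    qed
  qed (use TIn in \<open>auto simp: occupies_def tx_tgt_eq_iff\<close>)
next
  case (TOut v t)
  show ?thesis
  proof
    assume "occupies i w"
    then show "\<exists>e\<in>network. traverses Q i e \<and> tx_tgt xI e = w"
      using TOut path_0[OF assms] path_in_V[OF assms, of t] assms
      by (cases t) (auto simp: occupies_def intro: bexI[of _ "LoopE i"] bexI[of _ "HoldE v t"])
  qed (use TOut path_0[OF assms] in \<open>auto simp: occupies_def tx_tgt_eq_iff\<close>)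
next
  case (GadA f t)
  then show ?thesis
    using path_move[OF assms, of t]
    by (auto simp: occupies_def tx_tgt_eq_iff intro: bexI[of _ "GInE (Q i t) f t"])
next
  case (GadB f t)
  then show ?thesis
    using path_move[OF assms, of t] by (auto simp: occupies_def tx_tgt_eq_iff)
qed

lemma leaves_iff_occupies:
  assumes "i < n"
  shows "(\<exists>e\<in>network. traverses Q i e \<and> tx_src xG T e = w) \<longleftrightarrow> occupies i w"
proof (cases w)
  case (TIn v t)
  then show ?thesis
    using path_in_V[OF assms, of t] by (auto simp: occupies_def tx_src_eq_iff)
next
  case (TOut v t)
  show ?thesis
  proof
    assume occ: "occupies i w"
    show "\<exists>e\<in>network. traverses Q i e \<and> tx_src xG T e = w"
    proof (cases "t < T")
      case True
      then show ?thesis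
        using occ TOut path_in_V[OF assms, of t] path_move[OF assms, of t]
        by (cases "Q i (Suc t) = v")
          (auto simp: occupies_def
            intro: bexI[of _ "MoveE v t"] bexI[of _ "GInE v {v, Q i (Suc t)} t"])
    next
      case False
      then show ?thesis
        using occ TOut path_after_T[OF assms] assms
        by (auto simp: occupies_def intro: bexI[of _ "LoopE i"])
    qed
  qed (use TOut path_after_T[OF assms] in \<open>auto simp: occupies_def tx_src_eq_iff\<close>)
next
  case (GadA f t)
  then show ?thesis
    using path_move[OF assms, of t] by (auto simp: occupies_def tx_src_eq_iff)
next
  case (GadB f t)
  then show ?thesis
    using path_move[OF assms, of t]
    by (auto simp: occupies_def tx_src_eq_iff intro: bexI[of _ "GOutE f (Q i (Suc t)) t"])
qed

lemma traversed_entering_unique: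
  "e1 \<in> network \<Longrightarrow> e2 \<in> network \<Longrightarrow> traverses Q i e1 \<Longrightarrow> traverses Q i e2 \<Longrightarrow>
    tx_tgt xI e1 = tx_tgt xI e2 \<Longrightarrow> e1 = e2"
  by (cases e1; cases e2) auto

lemma traversed_leaving_unique:
  "e1 \<in> network \<Longrightarrow> e2 \<in> network \<Longrightarrow> traverses Q i e1 \<Longrightarrow> traverses Q i e2 \<Longrightarrow>
    tx_src xG T e1 = tx_src xG T e2 \<Longrightarrow> e1 = e2"
  by (cases e1; cases e2) auto

lemma path_flow_sum:
  assumes "i < n"
    and "\<And>e1 e2. e1 \<in> network \<Longrightarrow> e2 \<in> network \<Longrightarrow> P e1 \<Longrightarrow> P e2 \<Longrightarrow>
           traverses Q i e1 \<Longrightarrow> traverses Q i e2 \<Longrightarrow> e1 = e2"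
  shows "(\<Sum>e\<in>{e \<in> network. P e}. path_flow i e) =
    (if \<exists>e\<in>network. traverses Q i e \<and> P e then 1 else 0)"
proof -
  have "(\<Sum>e\<in>{e \<in> network. P e}. path_flow i e) =
      (\<Sum>e\<in>{e \<in> network. P e}. if traverses Q i e then 1 else 0)"
    using assms(1) by (intro sum.cong) (auto simp: path_flow_def)
  also have "\<dots> = (if \<exists>e\<in>network. traverses Q i e \<and> P e then 1 else 0)"
    using finite_network assms(2) by (subst sum_indicator_unique) auto
  finally show ?thesis .
qed

lemma path_flow_conservation:
  assumes "i < n"
  shows "(\<Sum>e\<in>{e \<in> network. tx_tgt xI e = w}. path_flow i e) =
    (\<Sum>e\<in>{e \<in> network. tx_src xG T e = w}. path_flow i e)"
proof -
  have "(\<Sum>e\<in>{e \<in> network. tx_tgt xI e = w}. path_flow i e) = (if occupies i w then 1 else 0)"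
    using path_flow_sum[OF assms, of "\<lambda>e. tx_tgt xI e = w"] traversed_entering_unique
      enters_iff_occupies[OF assms]
    by auto
  moreover have "(\<Sum>e\<in>{e \<in> network. tx_src xG T e = w}. path_flow i e) =
      (if occupies i w then 1 else 0)"
    using path_flow_sum[OF assms, of "\<lambda>e. tx_src xG T e = w"] traversed_leaving_unique
      leaves_iff_occupies[OF assms]
    by auto
  ultimately show ?thesis by simp
qed

lemma path_flow_capacity: "(\<Sum>i<n. path_flow i e) \<le> 1"
proof -
  have unique: "a = b" if "a < n" "b < n" "traverses Q a e" "traverses Q b e" for a b
    using solution that traverses_exclusive[of Q a b e]
    by (cases "a = b") (auto simp: is_solution_def)
  have "(\<Sum>i<n. path_flow i e) = (\<Sum>i<n. if e \<in> network \<and> traverses Q i e then 1 else 0)"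
    by (intro sum.cong) (auto simp: path_flow_def)
  also have "\<dots> = (if \<exists>i<n. e \<in> network \<and> traverses Q i e then 1 else 0)"
    using unique by (subst sum_indicator_unique) auto
  finally show ?thesis by simp
qed

lemma path_flow_feasible: "ilp_feasible V E n xI xG T path_flow"
  using path_flow_capacity path_flow_conservation
  by (simp add: ilp_feasible_def) (auto simp: path_flow_def)

lemma path_flow_obj: "ilp_obj n path_flow = n"
  by (simp add: ilp_obj_def path_flow_def)

end

lemma ilp_obj_le:
  assumes "ilp_feasible V E n xI xG T x"
  shows "ilp_obj n x \<le> n"
proof -
  have "x i (LoopE i) \<le> 1" if "i < n" for i
    using assms that unfolding ilp_feasible_def by simp
  then have "(\<Sum>i<n. x i (LoopE i)) \<le> (\<Sum>i<n. 1)" by (intro sum_mono) simp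
  then show ?thesis by (simp add: ilp_obj_def)
qed

lemma ilp_optimal_exists: "\<exists>x. ilp_optimal V E n xI xG T x"
proof -
  let ?S = "{ilp_obj n x | x. ilp_feasible V E n xI xG T x}"
  have "?S \<subseteq> {..n}" using ilp_obj_le by blast
  then have "finite ?S" by (rule finite_subset) simp
  moreover have "ilp_feasible V E n xI xG T (\<lambda>_ _. 0)" by (simp add: ilp_feasible_def)
  then have "?S \<noteq> {}" by blast
  ultimately have "Max ?S \<in> ?S" by (rule Max_in)
  then show ?thesis by (auto simp: ilp_optimal_def ilp_opt_def)
qed

lemma ilp_opt_eq_n_iff:
  "ilp_opt V E n xI xG T = n \<longleftrightarrow> (\<exists>x. ilp_feasible V E n xI xG T x \<and> ilp_obj n x = n)"
proof
  assume "ilp_opt V E n xI xG T = n"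
  then show "\<exists>x. ilp_feasible V E n xI xG T x \<and> ilp_obj n x = n"
    using ilp_optimal_exists by (metis ilp_optimal_def)
next
  assume "\<exists>x. ilp_feasible V E n xI xG T x \<and> ilp_obj n x = n"
  then have "n \<in> {ilp_obj n x | x. ilp_feasible V E n xI xG T x}" by force
  moreover have "{ilp_obj n x | x. ilp_feasible V E n xI xG T x} \<subseteq> {..n}" using ilp_obj_le by blast
  ultimately show "ilp_opt V E n xI xG T = n"
    unfolding ilp_opt_def by (intro Max_eqI) (auto intro: finite_subset)
qed

lemma ilp_obj_eq_n_saturated:
  assumes feasible: "ilp_feasible V E n xI xG T x" and obj: "ilp_obj n x = n" and "i < n"
  shows "x i (LoopE i) = 1"
proof (rule ccontr)
  assume "x i (LoopE i) \<noteq> 1"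
  moreover have le: "x j (LoopE j) \<le> 1" if "j < n" for j
    using feasible that unfolding ilp_feasible_def by simp
  ultimately have "(\<Sum>j<n. x j (LoopE j)) < (\<Sum>j<n. 1)"
    using \<open>i < n\<close> by (intro sum_strict_mono_ex1) (auto simp: le_less)
  then show False using obj by (simp add: ilp_obj_def)
qed

lemma ilp_opt_eq_n_iff_solution:
  assumes "mpp_instance V E n xI xG"
  shows "ilp_opt V E n xI xG T = n \<longleftrightarrow> (\<exists>P. is_solution E n xI xG P \<and> makespan n xG P \<le> T)"
proof
  assume "ilp_opt V E n xI xG T = n"
  then obtain x where "ilp_feasible V E n xI xG T x" "ilp_obj n x = n"
    using ilp_opt_eq_n_iff by blast
  then interpret saturated_flow V E n xI xG T x
    using assms ilp_obj_eq_n_saturated by unfold_locales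
  show "\<exists>P. is_solution E n xI xG P \<and> makespan n xG P \<le> T"
    using paths_solution paths_makespan by blast
next
  assume "\<exists>P. is_solution E n xI xG P \<and> makespan n xG P \<le> T"
  then obtain P where "is_solution E n xI xG P" "makespan n xG P \<le> T" by blast
  then interpret makespan_bounded_solution V E n xI xG P T
    using assms by unfold_locales
  show "ilp_opt V E n xI xG T = n"
    using ilp_opt_eq_n_iff path_flow_feasible path_flow_obj by blast
qed

lemma ilp_optimal_extract_paths:
  assumes "mpp_instance V E n xI xG"
    and "ilp_opt V E n xI xG T = n" and "ilp_optimal V E n xI xG T x"
  shows "is_solution E n xI xG (extract_paths V E n xI xG T x)"
    and "makespan n xG (extract_paths V E n xI xG T x) \<le> T"
proof -
  interpret saturated_flow V E n xI xG T x
    using assms ilp_obj_eq_n_saturated by unfold_locales (auto simp: ilp_optimal_def)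
  show "is_solution E n xI xG paths" "makespan n xG paths \<le> T"
    by (fact paths_solution paths_makespan)+
qed

lemma gdist_le_kmin:
  assumes "feasible_path E s g p"
  shows "gdist E s g \<le> kmin p g"
proof -
  have "\<exists>j\<le>k. (s, p k) \<in> E ^^ j" for k
  proof (induction k)
    case 0
    then show ?case using assms by (auto simp: feasible_path_def)
  next
    case (Suc k)
    then obtain j where "j \<le> k" "(s, p k) \<in> E ^^ j" by blast
    then show ?case
      using feasible_path_step[OF assms, of k] by (metis Suc_le_mono le_SucI relpow_Suc_I)
  qed
  then obtain j where "j \<le> kmin p g" "(s, p (kmin p g)) \<in> E ^^ j" by blast
  moreover have "p (kmin p g) = g" using feasible_path_at_goal[OF assms] by simp
  ultimately show ?thesis unfolding gdist_def by (metis Least_le le_trans)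
qed

lemma tompp_start_le_makespan:
  assumes "is_solution E n xI xG Q"
  shows "tompp_start E n xI xG \<le> makespan n xG Q"
proof -
  have "gdist E (xI i) (xG i) \<le> makespan n xG Q" if "i < n" for i
    using gdist_le_kmin kmin_le_makespan[OF that] assms that
    by (metis is_solution_def le_trans)
  then show ?thesis by (auto simp: tompp_start_def)
qed

definition excise :: "(nat \<Rightarrow> nat \<Rightarrow> 'v) \<Rightarrow> nat \<Rightarrow> nat \<Rightarrow> nat \<Rightarrow> nat \<Rightarrow> 'v" where
  "excise Q a d i t = (if t < a then Q i t else Q i (t + d))"

lemma excise_consecutive:
  assumes "\<And>i. i < n \<Longrightarrow> Q i a = Q i (a + d)"
  shows "\<exists>k'. \<forall>i<n. excise Q a d i k = Q i k' \<and> excise Q a d i (Suc k) = Q i (Suc k')"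
proof -
  consider "Suc k < a" | "Suc k = a" | "a \<le> k" by linarith
  then show ?thesis
  proof cases
    case 2
    then show ?thesis using assms by (intro exI[of _ k]) (auto simp: excise_def)
  qed (auto simp: excise_def intro: exI[of _ k] exI[of _ "k + d"])
qed

lemma excise_solution:
  assumes sol: "is_solution E n xI xG Q"
    and repeat: "\<And>i. i < n \<Longrightarrow> Q i a = Q i (a + d)"
    and le: "a + d \<le> makespan n xG Q"
  shows "is_solution E n xI xG (excise Q a d)"
    and "makespan n xG (excise Q a d) \<le> makespan n xG Q - d"
proof -
  have feasible: "feasible_path E (xI i) (xG i) (Q i)" if "i < n" for i
    using sol that by (simp add: is_solution_def)
  have consecutive:
    "\<exists>k'. \<forall>i<n. excise Q a d i k = Q i k' \<and> excise Q a d i (Suc k) = Q i (Suc k')" for k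
    using repeat by (rule excise_consecutive)
  have at_goal: "excise Q a d i t = xG i" if "i < n" "makespan n xG Q - d \<le> t" for i t
    using feasible_path_at_goal[OF feasible] kmin_le_makespan[of i n Q xG] le that
    by (auto simp: excise_def)
  have "excise Q a d i 0 = xI i" if "i < n" for i
    using repeat[of i] feasible[of i] that
    by (cases "a = 0") (auto simp: excise_def feasible_path_def)
  moreover have
    "excise Q a d i k = excise Q a d i (Suc k) \<or> (excise Q a d i k, excise Q a d i (Suc k)) \<in> E"
    if "i < n" for i k
    using consecutive[of k] feasible_path_step[OF feasible[OF that]] that by metis
  ultimately show "is_solution E n xI xG (excise Q a d)"
    using sol consecutive at_goal
    by (auto simp: is_solution_def feasible_path_def collide_def) metis+
  have "kmin (excise Q a d i) (xG i) \<le> makespan n xG Q - d" if "i < n" for i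
    unfolding kmin_def using at_goal[OF that] by (intro Least_le) simp
  then show "makespan n xG (excise Q a d) \<le> makespan n xG Q - d"
    by (auto simp: makespan_def)
qed

lemma repeated_configuration:
  fixes Q :: "nat \<Rightarrow> nat \<Rightarrow> 'v"
  assumes "finite V" and "\<And>i t. i < n \<Longrightarrow> Q i t \<in> V" and "card V ^ n < m"
  shows "\<exists>a b. a < b \<and> b \<le> m \<and> (\<forall>i<n. Q i a = Q i b)"
proof -
  define c where "c t = restrict (\<lambda>i. Q i t) {..<n}" for t
  have "c t \<in> PiE {..<n} (\<lambda>_. V)" for t
    using assms(2) unfolding c_def by (subst restrict_PiE_iff) simp
  then have "c ` {0..m} \<subseteq> PiE {..<n} (\<lambda>_. V)" by blast
  moreover have "card (PiE {..<n} (\<lambda>_. V)) = card V ^ n" by (simp add: card_PiE)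
  ultimately have "\<not> inj_on c {0..m}"
    using card_inj_on_le[of c "{0..m}" "PiE {..<n} (\<lambda>_. V)"] assms(1,3) by (auto simp: finite_PiE)
  then obtain a b where "a \<le> m" "b \<le> m" "a < b" "c a = c b"
    unfolding inj_on_def by (metis atLeastAtMost_iff linorder_neqE_nat)
  moreover have "Q i a = Q i b" if "i < n" for i
    using fun_cong[OF \<open>c a = c b\<close>, of i] that by (simp add: c_def)
  ultimately show ?thesis by blast
qed

lemma exists_solution_within_bound:
  assumes mpp: "mpp_instance V E n xI xG" and "is_solution E n xI xG Q"
  shows "\<exists>P. is_solution E n xI xG P \<and> makespan n xG P \<le> tompp_bound V n"
proof -
  obtain P where P: "is_solution E n xI xG P"
    and least: "\<And>P'. is_solution E n xI xG P' \<Longrightarrow> makespan n xG P \<le> makespan n xG P'"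
    using ex_has_least_nat[of "is_solution E n xI xG" Q "makespan n xG"] assms(2) by blast
  have "makespan n xG P \<le> card V ^ n"
  proof (rule ccontr)
    assume "\<not> makespan n xG P \<le> card V ^ n"
    moreover have "P i t \<in> V" if "i < n" for i t
      using P mpp feasible_path_in_V[of E "xI i" "xG i" "P i" V t] that
      by (auto simp: is_solution_def mpp_instance_def simple_connected_graph_def)
    moreover have "finite V" using mpp by (simp add: mpp_instance_def simple_connected_graph_def)
    ultimately obtain a b where "a < b" "b \<le> makespan n xG P" "\<forall>i<n. P i a = P i b"
      using repeated_configuration[of V n P "makespan n xG P"] by (meson not_le)
    then have "is_solution E n xI xG (excise P a (b - a))"
      and "makespan n xG (excise P a (b - a)) < makespan n xG P"
      using excise_solution[OF P, of a "b - a"] by fastforce+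
    then show False using least by fastforce
  qed
  then show ?thesis using P by (auto simp: tompp_bound_def)
qed

lemma tompp_result_Some_optimal:
  assumes mpp: "mpp_instance V E n xI xG" and "tompp_result V E n xI xG (Some P)"
  shows "is_solution E n xI xG P"
    and "is_solution E n xI xG Q \<Longrightarrow> makespan n xG P \<le> makespan n xG Q"
proof -
  obtain T x where earlier: "\<And>T'. tompp_start E n xI xG \<le> T' \<Longrightarrow> T' < T \<Longrightarrow> ilp_opt V E n xI xG T' \<noteq> n"
    and "ilp_opt V E n xI xG T = n" "ilp_optimal V E n xI xG T x"
    and "P = extract_paths V E n xI xG T x"
    using assms(2) by (auto simp: tompp_result_def)
  then have sol: "is_solution E n xI xG P" and "makespan n xG P \<le> T"
    using ilp_optimal_extract_paths[OF mpp] by auto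
  show "is_solution E n xI xG P" by (fact sol)
  assume "is_solution E n xI xG Q"
  then have "\<not> makespan n xG Q < T"
    using earlier tompp_start_le_makespan ilp_opt_eq_n_iff_solution[OF mpp] by blast
  with \<open>makespan n xG P \<le> T\<close> show "makespan n xG P \<le> makespan n xG Q" by simp
qed

lemma tompp_result_Some_exists:
  assumes mpp: "mpp_instance V E n xI xG" and "is_solution E n xI xG Q"
  shows "\<exists>P. tompp_result V E n xI xG (Some P)"
proof -
  define success where "success T \<longleftrightarrow> tompp_start E n xI xG \<le> T \<and> ilp_opt V E n xI xG T = n" for T
  obtain Q' where "is_solution E n xI xG Q'" "makespan n xG Q' \<le> tompp_bound V n"
    using exists_solution_within_bound[OF assms] by blast
  moreover from this(1) have "success (makespan n xG Q')"
    using tompp_start_le_makespan ilp_opt_eq_n_iff_solution[OF mpp] by (auto simp: success_def)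
  ultimately have "success (Least success)" "Least success \<le> tompp_bound V n"
    and "\<And>T'. T' < Least success \<Longrightarrow> \<not> success T'"
    by (auto intro: LeastI Least_le[THEN order_trans] dest: not_less_Least)
  moreover obtain x where "ilp_optimal V E n xI xG (Least success) x"
    using ilp_optimal_exists by blast
  ultimately show ?thesis by (auto simp: tompp_result_def success_def)
qed

lemma tompp_result_None_iff:
  assumes mpp: "mpp_instance V E n xI xG"
  shows "tompp_result V E n xI xG None \<longleftrightarrow> (\<nexists>P. is_solution E n xI xG P)"
proof
  assume none: "tompp_result V E n xI xG None"
  show "\<nexists>P. is_solution E n xI xG P"
  proof
    assume "\<exists>P. is_solution E n xI xG P"
    then obtain P where "is_solution E n xI xG P" "makespan n xG P \<le> tompp_bound V n"
      using exists_solution_within_bound[OF mpp] by blast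
    moreover have "tompp_start E n xI xG \<le> makespan n xG P"
      using calculation(1) by (rule tompp_start_le_makespan)
    ultimately show False
      using none ilp_opt_eq_n_iff_solution[OF mpp] by (auto simp: tompp_result_def)
  qed
qed (auto simp: tompp_result_def ilp_opt_eq_n_iff_solution[OF mpp])

theorem proposition1:
  fixes V :: "'v set" and E :: "('v \<times> 'v) set" and n :: nat and xI xG :: "nat \<Rightarrow> 'v"
  assumes "mpp_instance V E n xI xG"
  shows "((\<exists>P. is_solution E n xI xG P) \<longrightarrow>
            (\<exists>P. tompp_result V E n xI xG (Some P)) \<and>
            (\<forall>res. tompp_result V E n xI xG res \<longrightarrow>
               (\<exists>P. res = Some P \<and> is_solution E n xI xG P \<and>
                    (\<forall>Q. is_solution E n xI xG Q \<longrightarrow> makespan n xG P \<le> makespan n xG Q))))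
       \<and> ((\<nexists>P. is_solution E n xI xG P) \<longrightarrow>
            tompp_result V E n xI xG None \<and>
            (\<forall>res. tompp_result V E n xI xG res \<longrightarrow> res = None))"
proof (intro conjI impI allI)
  assume "\<exists>P. is_solution E n xI xG P"
  then show "\<exists>P. tompp_result V E n xI xG (Some P)"
    using tompp_result_Some_exists[OF assms] by blast
next
  fix res
  assume "\<exists>P. is_solution E n xI xG P" and "tompp_result V E n xI xG res"
  then show "\<exists>P. res = Some P \<and> is_solution E n xI xG P \<and>
               (\<forall>Q. is_solution E n xI xG Q \<longrightarrow> makespan n xG P \<le> makespan n xG Q)"
    using tompp_result_None_iff[OF assms] tompp_result_Some_optimal[OF assms] by (cases res) auto
next
  assume "\<nexists>P. is_solution E n xI xG P"
  then show "tompp_result V E n xI xG None" using tompp_result_None_iff[OF assms] by blast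
next
  fix res
  assume "\<nexists>P. is_solution E n xI xG P" and "tompp_result V E n xI xG res"
  then show "res = None" using tompp_result_Some_optimal(1)[OF assms] by (cases res) auto
qed

end
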